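(* Let $\mathcal M=(\mathcal S,\mathcal A,P,r,\gamma)$, $\mathcal Z$, $\{\sigma_t\}_{t\ge1}$, $\hat f$, $\mathfrak F$ be as in the context, and suppose the features $Z_t=\sigma_t(H_t)$ form an $(\epsilon,\delta)$-approximate information state with respect to $\mathfrak F$, with AIS approximator $(\hat r,\hat P)$. Let $\hat V$ be the solution of the AIS dynamic program, $\mu$ a policy greedy with respect to $\hat Q$, and $\pi=(\pi_t)_{t\ge1}$, $\pi_t=\mu\circ\sigma_t$, the induced history-based policy. Then $$\Delta:=\sup_{t\ge1}\ \sup_{h_t\in\mathcal H_t}\big|V^\star(s_t)-V^{\pi}_t(h_t)\big|\ \le\ \frac{2\big(\epsilon+\gamma\,\delta\,\kappa_{\mathfrak F}(\hat V,\hat f)\big)}{1-\gamma},$$ where $\kappa_{\mathfrak F}(\hat V,\hat f)=\sup_{z\in\mathcal Z,\,a\in\mathcal A}\rho_{\mathfrak F}\big(s\mapsto \hat V(\hat f(z,s,a))\big)$ and $s_t$ denotes the last state of $h_t$.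
   Context: MDP: $\mathcal M=(\mathcal S,\mathcal A,P,r,\gamma)$ with finite state space $\mathcal S$, finite action space $\mathcal A$, transition kernel $P(s'\mid s,a)$, bounded reward $r:\mathcal S\times\mathcal A\to\mathbb R$, discount $\gamma\in(0,1)$. $V^\star(s)$ is the optimal value: the supremum over all (randomised, possibly history-dependent) policies of $\mathbb E[\sum_{k\ge1}\gamma^{k-1}r(S_k,A_k)\mid S_1=s]$. A history at time $t$ is $h_t=(s_{1:t},a_{1:t-1})\in\mathcal H_t=\mathcal S^t\times\mathcal A^{t-1}$. Feature abstraction: $\mathcal Z$ is a set; maps $\sigma_t:\mathcal H_t\to\mathcal Z$ are recursively updatable, i.e. there is $\hat f:\mathcal Z\times\mathcal S\times\mathcal A\to\mathcal Z$ with $\sigma_{t+1}(s_{1:t+1},a_{1:t})=\hat f(\sigma_t(s_{1:t},a_{1:t-1}),s_{t+1},a_t)$ for all $t\ge1$. IPM: $\mathfrak F$ is a class of real functions on $\mathcal S$; for $\nu_1,\nu_2\in\Delta(\mathcal S)$, $d_{\mathfrak F}(\nu_1,\nu_2)=\sup_{g\in\mathfrak F}|\sum_s g(s)\nu_1(s)-\sum_s g(s)\nu_2(s)|$; the Minkowski functional is $\rho_{\mathfrak F}(g)=\inf\{\rho\ge0:\rho^{-1}g\in\mathfrak F\}$ (with $\inf\emptyset=+\infty$). AIS: the features are an $(\epsilon,\delta)$-AIS w.r.t. $\mathfrak F$ if there exist a bounded $\hat r:\mathcal Z\times\mathcal A\to\mathbb R$ and $\hat P:\mathcal Z\times\mathcal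 A\to\Delta(\mathcal S)$ (the AIS approximator) such that for all $t$, all $h_t\in\mathcal H_t$ and all $a\in\mathcal A$: $|r(s_t,a)-\hat r(\sigma_t(h_t),a)|\le\epsilon$ and $d_{\mathfrak F}(P(\cdot\mid s_t,a),\hat P(\cdot\mid\sigma_t(h_t),a))\le\delta$. AIS dynamic program: $\hat V:\mathcal Z\to\mathbb R$ is the unique bounded function satisfying $\hat V(z)=\max_{a}\hat Q(z,a)$, where $\hat Q(z,a)=\hat r(z,a)+\gamma\sum_{s'\in\mathcal S}\hat P(s'\mid z,a)\hat V(\hat f(z,s',a))$. A policy $\mu:\mathcal Z\to\Delta(\mathcal A)$ is greedy if $\mathrm{supp}\,\mu(z)\subseteq\arg\max_a\hat Q(z,a)$ for all $z$. Value of the history-based policy: $V^{\pi}_t(h_t)=\mathbb E[\sum_{k\ge t}\gamma^{k-t}r(S_k,A_k)]$ where the process starts at time $t$ from state $s_t$ with feature $Z_t=\sigma_t(h_t)$, actions are drawn as $A_k\sim\mu(Z_k)$, $S_{k+1}\sim P(\cdot\mid S_k,A_k)$, and $Z_{k+1}=\hat f(Z_k,S_{k+1},A_k)$. *)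

theory Defs
  imports "HOL-Probability.Probability_Mass_Function" "HOL-Library.Extended_Real"
begin

text \<open>Histories h_t = (s_1, [(a_1,s_2), ..., (a_{t-1},s_t)]); the time index is
  t = length of the list + 1. Every value of this type is a valid history.\<close>
type_synonym ('s,'a) hist = "'s \<times> ('a \<times> 's) list"

definition last_state :: "('s,'a) hist \<Rightarrow> 's" where
  "last_state h = (if snd h = [] then fst h else snd (last (snd h)))"

definition ext_hist :: "('s,'a) hist \<Rightarrow> 'a \<Rightarrow> 's \<Rightarrow> ('s,'a) hist" where
  "ext_hist h a s' = (fst h, snd h @ [(a, s')])"

fun hist_val :: "('s::finite \<Rightarrow> 'a::finite \<Rightarrow> 's pmf) \<Rightarrow> ('s \<Rightarrow> 'a \<Rightarrow> real) \<Rightarrow> real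
    \<Rightarrow> (('s,'a) hist \<Rightarrow> 'a pmf) \<Rightarrow> nat \<Rightarrow> ('s,'a) hist \<Rightarrow> real" where
  "hist_val P r \<gamma> pol 0 h = 0"
| "hist_val P r \<gamma> pol (Suc n) h =
     (\<Sum>a\<in>UNIV. pmf (pol h) a * (r (last_state h) a
        + \<gamma> * (\<Sum>s'\<in>UNIV. pmf (P (last_state h) a) s' * hist_val P r \<gamma> pol n (ext_hist h a s'))))"

definition policy_value :: "('s::finite \<Rightarrow> 'a::finite \<Rightarrow> 's pmf) \<Rightarrow> ('s \<Rightarrow> 'a \<Rightarrow> real) \<Rightarrow> real
    \<Rightarrow> (('s,'a) hist \<Rightarrow> 'a pmf) \<Rightarrow> 's \<Rightarrow> real" where
  "policy_value P r \<gamma> pol s = lim (\<lambda>n. hist_val P r \<gamma> pol n (s, []))"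

definition Vstar :: "('s::finite \<Rightarrow> 'a::finite \<Rightarrow> 's pmf) \<Rightarrow> ('s \<Rightarrow> 'a \<Rightarrow> real) \<Rightarrow> real \<Rightarrow> 's \<Rightarrow> real" where
  "Vstar P r \<gamma> s = (SUP pol. policy_value P r \<gamma> pol s)"

fun feat_val :: "('s::finite \<Rightarrow> 'a::finite \<Rightarrow> 's pmf) \<Rightarrow> ('s \<Rightarrow> 'a \<Rightarrow> real) \<Rightarrow> real
    \<Rightarrow> ('z \<Rightarrow> 's \<Rightarrow> 'a \<Rightarrow> 'z) \<Rightarrow> ('z \<Rightarrow> 'a pmf) \<Rightarrow> nat \<Rightarrow> 's \<Rightarrow> 'z \<Rightarrow> real" where
  "feat_val P r \<gamma> fhat mu 0 s z = 0"
| "feat_val P r \<gamma> fhat mu (Suc n) s z =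
     (\<Sum>a\<in>UNIV. pmf (mu z) a * (r s a
        + \<gamma> * (\<Sum>s'\<in>UNIV. pmf (P s a) s' * feat_val P r \<gamma> fhat mu n s' (fhat z s' a))))"

definition induced_value :: "('s::finite \<Rightarrow> 'a::finite \<Rightarrow> 's pmf) \<Rightarrow> ('s \<Rightarrow> 'a \<Rightarrow> real) \<Rightarrow> real
    \<Rightarrow> ('z \<Rightarrow> 's \<Rightarrow> 'a \<Rightarrow> 'z) \<Rightarrow> ('z \<Rightarrow> 'a pmf) \<Rightarrow> (('s,'a) hist \<Rightarrow> 'z) \<Rightarrow> ('s,'a) hist \<Rightarrow> real" where
  "induced_value P r \<gamma> fhat mu \<sigma> h = lim (\<lambda>n. feat_val P r \<gamma> fhat mu n (last_state h) (\<sigma> h))"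

text \<open>Integral probability metric (extended-real valued, so that it is +infinity when unbounded).\<close>
definition ipm :: "('s::finite \<Rightarrow> real) set \<Rightarrow> 's pmf \<Rightarrow> 's pmf \<Rightarrow> ereal" where
  "ipm F \<nu>1 \<nu>2 = (SUP g\<in>F. ereal \<bar>(\<Sum>s\<in>UNIV. g s * pmf \<nu>1 s) - (\<Sum>s\<in>UNIV. g s * pmf \<nu>2 s)\<bar>)"

text \<open>Minkowski functional, with inf of the empty set = +infinity.\<close>
definition minkowski :: "('s \<Rightarrow> real) set \<Rightarrow> ('s \<Rightarrow> real) \<Rightarrow> ereal" where
  "minkowski F g = Inf {ereal \<rho> | \<rho>. \<rho> > 0 \<and> (\<lambda>s. g s / \<rho>) \<in> F}"

definition kappa :: "('s \<Rightarrow> real) set \<Rightarrow> ('z \<Rightarrow> real) \<Rightarrow> ('z \<Rightarrow> 's \<Rightarrow> 'a \<Rightarrow> 'z) \<Rightarrow> ereal" where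
  "kappa F Vh fhat = (SUP za\<in>UNIV. minkowski F (\<lambda>s. Vh (fhat (fst za) s (snd za))))"

definition Qhat :: "real \<Rightarrow> ('z \<Rightarrow> 'a \<Rightarrow> real) \<Rightarrow> ('z \<Rightarrow> 'a \<Rightarrow> 's::finite pmf)
    \<Rightarrow> ('z \<Rightarrow> 's \<Rightarrow> 'a \<Rightarrow> 'z) \<Rightarrow> ('z \<Rightarrow> real) \<Rightarrow> 'z \<Rightarrow> 'a \<Rightarrow> real" where
  "Qhat \<gamma> rhat Phat fhat Vh z a = rhat z a + \<gamma> * (\<Sum>s'\<in>UNIV. pmf (Phat z a) s' * Vh (fhat z s' a))"

end

theory Submission
  imports Defs
begin

(* Every finite-horizon value is compared with Vh along the history. One step of the true
   Bellman recursion differs from the AIS backup Qhat by at most epsilon in the reward and, as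
   d_F(P, Phat) <= delta while s |-> Vh (fhat z s a) has Minkowski functional at most kappa, by at
   most delta * kappa in the expected continuation value. Iterating, the value of any policy from
   a history h is at most Vh (sigma h) + C, and that of the greedy policy mu o sigma at least
   Vh (sigma h) - C, where C = (epsilon + gamma * delta * kappa) / (1 - gamma) is the fixed point of
   C = epsilon + gamma * delta * kappa + gamma * C. Hence V* and V^pi both lie within C of
   Vh (sigma h). *)

lemma sum_pmf_le_const:
  fixes p :: "'x::finite pmf"
  assumes "\<And>x. x \<in> set_pmf p \<Longrightarrow> f x \<le> c"
  shows "(\<Sum>x\<in>UNIV. pmf p x * f x) \<le> c"
proof -
  have "(\<Sum>x\<in>UNIV. pmf p x * f x) \<le> (\<Sum>x\<in>UNIV. pmf p x * c)"
    using assms by (intro sum_mono) (metis mult_left_mono pmf_nonneg set_pmf_iff mult_zero_left order_refl)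
  also have "\<dots> = c"
    by (simp add: sum_distrib_right[symmetric] sum_pmf_eq_1)
  finally show ?thesis .
qed

lemma sum_pmf_ge_const:
  fixes p :: "'x::finite pmf"
  assumes "\<And>x. x \<in> set_pmf p \<Longrightarrow> c \<le> f x"
  shows "c \<le> (\<Sum>x\<in>UNIV. pmf p x * f x)"
  using sum_pmf_le_const[of p "\<lambda>x. - f x" "- c"] assms by (simp add: sum_negf)

lemma sum_pmf_mono:
  fixes p :: "'x::finite pmf"
  assumes "\<And>x. f x \<le> g x"
  shows "(\<Sum>x\<in>UNIV. pmf p x * f x) \<le> (\<Sum>x\<in>UNIV. pmf p x * g x)"
  by (rule sum_mono) (simp add: assms mult_left_mono)

lemma sum_pmf_add_const:
  fixes p :: "'x::finite pmf"
  shows "(\<Sum>x\<in>UNIV. pmf p x * (f x + c)) = (\<Sum>x\<in>UNIV. pmf p x * f x) + c"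
  by (simp add: distrib_left sum.distrib sum_distrib_right[symmetric] sum_pmf_eq_1)

lemma sum_pmf_diff:
  fixes p :: "'x::finite pmf"
  shows "(\<Sum>x\<in>UNIV. pmf p x * f x) - (\<Sum>x\<in>UNIV. pmf p x * g x)
    = (\<Sum>x\<in>UNIV. pmf p x * (f x - g x))"
  by (simp add: sum_subtractf right_diff_distrib)

lemma abs_sum_pmf_le:
  fixes p :: "'x::finite pmf"
  assumes "\<And>x. \<bar>f x\<bar> \<le> c"
  shows "\<bar>\<Sum>x\<in>UNIV. pmf p x * f x\<bar> \<le> c"
  using sum_pmf_le_const[of p f c] sum_pmf_ge_const[of p "- c" f] assms
  by (simp add: abs_le_iff) (metis abs_le_D1 abs_le_D2 minus_le_iff)

lemma abs_sum_pmf_diff_le_ipm_minkowski: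
  fixes \<nu>1 \<nu>2 :: "'s::finite pmf"
  assumes "minkowski F g \<le> ereal \<kappa>" and "ipm F \<nu>1 \<nu>2 \<le> ereal \<delta>"
  shows "\<bar>(\<Sum>s\<in>UNIV. pmf \<nu>1 s * g s) - (\<Sum>s\<in>UNIV. pmf \<nu>2 s * g s)\<bar> \<le> \<delta> * \<kappa>"
proof -
  define d where "d = \<bar>(\<Sum>s\<in>UNIV. pmf \<nu>1 s * g s) - (\<Sum>s\<in>UNIV. pmf \<nu>2 s * g s)\<bar>"
  define S where "S = {\<rho>. \<rho> > 0 \<and> (\<lambda>s. g s / \<rho>) \<in> F}"
  have d_le: "d \<le> \<delta> * \<rho>" if "\<rho> \<in> S" for \<rho>
  proof -
    have \<rho>: "\<rho> > 0" "(\<lambda>s. g s / \<rho>) \<in> F" using that by (auto simp: S_def)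
    have "(\<Sum>s\<in>UNIV. g s / \<rho> * pmf \<nu> s) = (\<Sum>s\<in>UNIV. pmf \<nu> s * g s) / \<rho>" for \<nu> :: "'s pmf"
      by (simp add: sum_divide_distrib mult.commute)
    then have "ereal (d / \<rho>) \<le> ipm F \<nu>1 \<nu>2"
      unfolding ipm_def d_def using \<rho>(1)
      by (intro SUP_upper2[OF \<rho>(2)]) (simp add: diff_divide_distrib[symmetric])
    then have "d / \<rho> \<le> \<delta>" using assms(2) by (meson ereal_less_eq(3) order_trans)
    then show ?thesis using \<rho>(1) by (simp add: field_simps)
  qed
  have minkowski_S: "minkowski F g = (INF \<rho>\<in>S. ereal \<rho>)"
    unfolding minkowski_def S_def by (simp add: image_Collect)
  have "S \<noteq> {}"
    using assms(1) unfolding minkowski_S by (auto simp: top_ereal_def)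
  then obtain \<rho>0 where "\<rho>0 \<in> S" by blast
  have "0 \<le> \<delta> * \<rho>0" using d_le[OF \<open>\<rho>0 \<in> S\<close>] by (simp add: d_def order_trans)
  then have \<delta>: "0 \<le> \<delta>" using \<open>\<rho>0 \<in> S\<close> by (simp add: S_def zero_le_mult_iff)
  have "bdd_below S" by (auto simp: S_def bdd_below_def intro: less_imp_le)
  then have "ereal (Inf S) = minkowski F g"
    unfolding minkowski_S using \<open>S \<noteq> {}\<close> by (rule ereal_Inf')
  then have "Inf S \<le> \<kappa>" using assms(1) by (metis ereal_less_eq(3))
  moreover have "d \<le> \<delta> * Inf S"
  proof (cases "\<delta> = 0")
    case True then show ?thesis using d_le[OF \<open>\<rho>0 \<in> S\<close>] by simp
  next
    case False
    then have "d / \<delta> \<le> Inf S"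
      using \<open>S \<noteq> {}\<close> d_le \<delta> by (intro cInf_greatest) (auto simp: field_simps)
    then show ?thesis using False \<delta> by (simp add: field_simps)
  qed
  ultimately show ?thesis unfolding d_def using \<delta> by (meson mult_left_mono order_trans)
qed

lemma minkowski_nonneg: "0 \<le> minkowski F g"
  unfolding minkowski_def by (rule Inf_greatest) auto

lemma minkowski_le_kappa: "minkowski F (\<lambda>s. Vh (fhat z s a)) \<le> kappa F Vh fhat"
  unfolding kappa_def by (rule SUP_upper2[of "(z, a)"]) auto

lemma kappa_nonneg: "0 \<le> kappa F Vh fhat"
  using minkowski_nonneg minkowski_le_kappa by (rule order_trans)

lemma abs_bellman_diff_le:
  fixes p :: "'a::finite pmf" and q :: "'a \<Rightarrow> 's::finite pmf"
  assumes "0 \<le> \<gamma>" and "\<And>a s'. \<bar>V a s' - W a s'\<bar> \<le> c"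
  shows "\<bar>(\<Sum>a\<in>UNIV. pmf p a * (R a + \<gamma> * (\<Sum>s'\<in>UNIV. pmf (q a) s' * V a s')))
        - (\<Sum>a\<in>UNIV. pmf p a * (R a + \<gamma> * (\<Sum>s'\<in>UNIV. pmf (q a) s' * W a s')))\<bar> \<le> \<gamma> * c"
proof -
  have "\<bar>\<gamma> * (\<Sum>s'\<in>UNIV. pmf (q a) s' * (V a s' - W a s'))\<bar> \<le> \<gamma> * c" for a
    using assms by (simp add: abs_mult mult_left_mono abs_sum_pmf_le)
  moreover have "(R a + \<gamma> * (\<Sum>s'\<in>UNIV. pmf (q a) s' * V a s'))
      - (R a + \<gamma> * (\<Sum>s'\<in>UNIV. pmf (q a) s' * W a s'))
      = \<gamma> * (\<Sum>s'\<in>UNIV. pmf (q a) s' * (V a s' - W a s'))" for a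
    by (simp only: add_diff_add diff_self add_0 sum_pmf_diff flip: right_diff_distrib)
  ultimately show ?thesis
    by (simp only: sum_pmf_diff abs_sum_pmf_le)
qed

lemma abs_hist_val_Suc_diff_le:
  fixes P :: "'s::finite \<Rightarrow> 'a::finite \<Rightarrow> 's pmf"
  assumes "0 \<le> \<gamma>" and "\<And>s a. \<bar>r s a\<bar> \<le> R"
  shows "\<bar>hist_val P r \<gamma> pol (Suc n) h - hist_val P r \<gamma> pol n h\<bar> \<le> \<gamma>^n * R"
proof (induction n arbitrary: h)
  case 0
  show ?case using assms(2) by (simp add: abs_sum_pmf_le)
next
  case (Suc n)
  have "\<bar>hist_val P r \<gamma> pol (Suc (Suc n)) h - hist_val P r \<gamma> pol (Suc n) h\<bar> \<le> \<gamma> * (\<gamma>^n * R)"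
    unfolding hist_val.simps(2)[of P r \<gamma> pol "Suc n" h] hist_val.simps(2)[of P r \<gamma> pol n h]
    by (rule abs_bellman_diff_le[OF assms(1) Suc.IH])
  then show ?case by (simp only: power_Suc mult.assoc)
qed

lemma convergent_hist_val:
  fixes P :: "'s::finite \<Rightarrow> 'a::finite \<Rightarrow> 's pmf"
  assumes "0 \<le> \<gamma>" "\<gamma> < 1"
  shows "convergent (\<lambda>n. hist_val P r \<gamma> pol n h)"
proof -
  define R where "R = (\<Sum>x\<in>UNIV. \<bar>r (fst x) (snd x)\<bar>)"
  define X where "X n = hist_val P r \<gamma> pol n h" for n
  have R: "\<bar>r s a\<bar> \<le> R" for s a
    unfolding R_def using member_le_sum[of "(s,a)" UNIV "\<lambda>x. \<bar>r (fst x) (snd x)\<bar>"] by simp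
  have bound: "norm (X (Suc n) - X n) \<le> \<gamma>^n * R" for n
    unfolding X_def real_norm_def by (rule abs_hist_val_Suc_diff_le[OF assms(1) R])
  have geometric: "summable (\<lambda>n. \<gamma>^n * R)"
    using assms by (intro summable_mult2 summable_geometric) simp
  have "summable (\<lambda>n. X (Suc n) - X n)"
    by (rule summable_comparison_test'[OF geometric bound])
  then have "convergent (\<lambda>n. X n - X 0)"
    by (simp only: summable_iff_convergent sum_lessThan_telescope)
  then have "convergent X"
    by (rule iffD1[OF convergent_diff_const_right_iff])
  then show ?thesis unfolding X_def .
qed

lemma lim_le_of_geometric_bound:
  fixes X :: "nat \<Rightarrow> real"
  assumes "convergent X" "\<And>n. X n \<le> c + \<gamma>^n * B" "0 \<le> \<gamma>" "\<gamma> < 1"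
  shows "lim X \<le> c"
proof -
  have "(\<lambda>n. c + \<gamma>^n * B) \<longlonglongrightarrow> c + 0 * B"
    using assms(3,4) by (intro tendsto_intros LIMSEQ_power_zero) auto
  then show ?thesis
    using assms(1,2) by (intro LIMSEQ_le[of X _ "\<lambda>n. c + \<gamma>^n * B"]) (simp_all add: convergent_LIMSEQ_iff)
qed

lemma lim_ge_of_geometric_bound:
  fixes X :: "nat \<Rightarrow> real"
  assumes "convergent X" "\<And>n. c - \<gamma>^n * B \<le> X n" "0 \<le> \<gamma>" "\<gamma> < 1"
  shows "c \<le> lim X"
proof -
  have "(\<lambda>n. c - \<gamma>^n * B) \<longlonglongrightarrow> c - 0 * B"
    using assms(3,4) by (intro tendsto_intros LIMSEQ_power_zero) auto
  then show ?thesis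
    using assms(1,2) by (intro LIMSEQ_le[of "\<lambda>n. c - \<gamma>^n * B" _ X]) (simp_all add: convergent_LIMSEQ_iff)
qed

definition hist_append :: "('s,'a) hist \<Rightarrow> ('s,'a) hist \<Rightarrow> ('s,'a) hist" where
  "hist_append h g = (fst h, snd h @ snd g)"

lemma fst_ext_hist [simp]: "fst (ext_hist g a s') = fst g"
  by (simp add: ext_hist_def)

lemma last_state_ext_hist [simp]: "last_state (ext_hist g a s') = s'"
  by (simp add: ext_hist_def last_state_def)

lemma fst_hist_append [simp]: "fst (hist_append h g) = fst h"
  by (simp add: hist_append_def)

lemma last_state_hist_append: "fst g = last_state h \<Longrightarrow> last_state (hist_append h g) = last_state g"
  by (auto simp: last_state_def hist_append_def)

lemma hist_append_ext_hist: "hist_append h (ext_hist g a s') = ext_hist (hist_append h g) a s'"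
  by (simp add: hist_append_def ext_hist_def)

lemma hist_append_Nil [simp]: "hist_append h (s, []) = h"
  by (simp add: hist_append_def)

(* The AIS conditions are only required along histories starting in s0: V* is defined through
   policies started at the one-point history (s, []), while Vh is evaluated at sigma h for a
   history h ending in s, and re-rooting sigma as g |-> sigma (hist_append h g) bridges the two. *)
locale rooted_ais =
  fixes P :: "'s::finite \<Rightarrow> 'a::finite \<Rightarrow> 's pmf"
    and r :: "'s \<Rightarrow> 'a \<Rightarrow> real"
    and \<gamma> :: real
    and \<sigma> :: "('s,'a) hist \<Rightarrow> 'z"
    and fhat :: "'z \<Rightarrow> 's \<Rightarrow> 'a \<Rightarrow> 'z"
    and rhat :: "'z \<Rightarrow> 'a \<Rightarrow> real"
    and Phat :: "'z \<Rightarrow> 'a \<Rightarrow> 's pmf"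
    and Vh :: "'z \<Rightarrow> real"
    and mu :: "'z \<Rightarrow> 'a pmf"
    and \<epsilon> D :: real
    and s0 :: 's
  assumes discount: "0 \<le> \<gamma>" "\<gamma> < 1"
    and recursive: "fst g = s0 \<Longrightarrow> \<sigma> (ext_hist g a s') = fhat (\<sigma> g) s' a"
    and reward_approx: "fst g = s0 \<Longrightarrow> \<bar>r (last_state g) a - rhat (\<sigma> g) a\<bar> \<le> \<epsilon>"
    and transition_approx: "fst g = s0 \<Longrightarrow>
      \<bar>(\<Sum>s\<in>UNIV. pmf (P (last_state g) a) s * Vh (fhat (\<sigma> g) s a))
        - (\<Sum>s\<in>UNIV. pmf (Phat (\<sigma> g) a) s * Vh (fhat (\<sigma> g) s a))\<bar> \<le> D"
    and Qhat_le_Vh: "Qhat \<gamma> rhat Phat fhat Vh z a \<le> Vh z"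
    and greedy: "a \<in> set_pmf (mu z) \<Longrightarrow> Vh z \<le> Qhat \<gamma> rhat Phat fhat Vh z a"
    and Vh_bounded: "\<exists>B. \<forall>z. \<bar>Vh z\<bar> \<le> B"
begin

lemma backup_le:
  assumes "fst g = s0" and "\<And>s'. W s' \<le> Vh (fhat (\<sigma> g) s' a) + K"
  shows "r (last_state g) a + \<gamma> * (\<Sum>s'\<in>UNIV. pmf (P (last_state g) a) s' * W s')
    \<le> Vh (\<sigma> g) + (\<epsilon> + \<gamma> * D + \<gamma> * K)"
proof -
  let ?E = "\<Sum>s'\<in>UNIV. pmf (P (last_state g) a) s' * Vh (fhat (\<sigma> g) s' a)"
  let ?Ehat = "\<Sum>s'\<in>UNIV. pmf (Phat (\<sigma> g) a) s' * Vh (fhat (\<sigma> g) s' a)"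
  have "(\<Sum>s'\<in>UNIV. pmf (P (last_state g) a) s' * W s') \<le> ?E + K"
    using sum_pmf_mono[OF assms(2)] by (simp only: sum_pmf_add_const)
  also have "\<dots> \<le> ?Ehat + D + K"
    using transition_approx[OF assms(1), of a] by linarith
  finally have "\<gamma> * (\<Sum>s'\<in>UNIV. pmf (P (last_state g) a) s' * W s') \<le> \<gamma> * (?Ehat + D + K)"
    using discount(1) by (rule mult_left_mono)
  then show ?thesis
    using reward_approx[OF assms(1), of a] Qhat_le_Vh[of "\<sigma> g" a]
    by (simp add: Qhat_def algebra_simps abs_le_iff)
qed

lemma backup_ge:
  assumes "fst g = s0" and "a \<in> set_pmf (mu (\<sigma> g))" and "\<And>s'. Vh (fhat (\<sigma> g) s' a) - K \<le> W s'"
  shows "Vh (\<sigma> g) - (\<epsilon> + \<gamma> * D + \<gamma> * K)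
    \<le> r (last_state g) a + \<gamma> * (\<Sum>s'\<in>UNIV. pmf (P (last_state g) a) s' * W s')"
proof -
  let ?E = "\<Sum>s'\<in>UNIV. pmf (P (last_state g) a) s' * Vh (fhat (\<sigma> g) s' a)"
  let ?Ehat = "\<Sum>s'\<in>UNIV. pmf (Phat (\<sigma> g) a) s' * Vh (fhat (\<sigma> g) s' a)"
  have "?Ehat - D - K \<le> ?E - K"
    using transition_approx[OF assms(1), of a] by linarith
  also have "\<dots> \<le> (\<Sum>s'\<in>UNIV. pmf (P (last_state g) a) s' * W s')"
    using sum_pmf_mono[of "\<lambda>s'. Vh (fhat (\<sigma> g) s' a) + - K", OF assms(3)[unfolded diff_conv_add_uminus]]
    by (simp only: sum_pmf_add_const diff_conv_add_uminus)
  finally have "\<gamma> * (?Ehat - D - K) \<le> \<gamma> * (\<Sum>s'\<in>UNIV. pmf (P (last_state g) a) s' * W s')"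
    using discount(1) by (rule mult_left_mono)
  then show ?thesis
    using reward_approx[OF assms(1), of a] greedy[OF assms(2)]
    by (simp add: Qhat_def algebra_simps abs_le_iff)
qed

lemma hist_val_le:
  assumes "\<And>z. \<bar>Vh z\<bar> \<le> B" and "0 \<le> C" and "\<epsilon> + \<gamma> * D + \<gamma> * C \<le> C" and "fst g = s0"
  shows "hist_val P r \<gamma> pol n g \<le> Vh (\<sigma> g) + C + \<gamma>^n * B"
  using assms(4)
proof (induction n arbitrary: g)
  case 0
  show ?case using assms(1)[of "\<sigma> g"] assms(2) by (simp add: abs_le_iff)
next
  case (Suc n)
  have "hist_val P r \<gamma> pol n (ext_hist g a s') \<le> Vh (fhat (\<sigma> g) s' a) + (C + \<gamma>^n * B)" for a s'
    using Suc.IH[of "ext_hist g a s'"] Suc.prems by (simp add: recursive add.assoc)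
  then have "hist_val P r \<gamma> pol (Suc n) g \<le> Vh (\<sigma> g) + (\<epsilon> + \<gamma> * D + \<gamma> * (C + \<gamma>^n * B))"
    unfolding hist_val.simps(2)[of P r \<gamma> pol n g]
    by (intro sum_pmf_le_const backup_le[OF Suc.prems])
  also have "\<dots> \<le> Vh (\<sigma> g) + C + \<gamma>^Suc n * B"
    using assms(3) by (simp add: algebra_simps)
  finally show ?case .
qed

lemma induced_hist_val_ge:
  assumes "\<And>z. \<bar>Vh z\<bar> \<le> B" and "0 \<le> C" and "\<epsilon> + \<gamma> * D + \<gamma> * C \<le> C" and "fst g = s0"
  shows "Vh (\<sigma> g) - C - \<gamma>^n * B \<le> hist_val P r \<gamma> (\<lambda>g. mu (\<sigma> g)) n g"
  using assms(4)
proof (induction n arbitrary: g)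
  case 0
  show ?case using assms(1)[of "\<sigma> g"] assms(2) by (simp add: abs_le_iff)
next
  case (Suc n)
  have "Vh (fhat (\<sigma> g) s' a) - (C + \<gamma>^n * B) \<le> hist_val P r \<gamma> (\<lambda>g. mu (\<sigma> g)) n (ext_hist g a s')"
    for a s'
    using Suc.IH[of "ext_hist g a s'"] Suc.prems by (simp add: recursive diff_diff_eq)
  then have "Vh (\<sigma> g) - (\<epsilon> + \<gamma> * D + \<gamma> * (C + \<gamma>^n * B))
      \<le> hist_val P r \<gamma> (\<lambda>g. mu (\<sigma> g)) (Suc n) g"
    unfolding hist_val.simps(2)[of P r \<gamma> _ n g]
    by (intro sum_pmf_ge_const backup_ge[OF Suc.prems])
  moreover have "Vh (\<sigma> g) - C - \<gamma>^Suc n * B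
      \<le> Vh (\<sigma> g) - (\<epsilon> + \<gamma> * D + \<gamma> * (C + \<gamma>^n * B))"
    using assms(3) by (simp add: algebra_simps)
  ultimately show ?case by linarith
qed

lemma feat_val_eq_hist_val:
  "fst g = s0 \<Longrightarrow>
    feat_val P r \<gamma> fhat mu n (last_state g) (\<sigma> g) = hist_val P r \<gamma> (\<lambda>g. mu (\<sigma> g)) n g"
proof (induction n arbitrary: g)
  case (Suc n)
  show ?case
    unfolding feat_val.simps(2) hist_val.simps(2)[of P r \<gamma> _ n g]
    using Suc.IH[of "ext_hist g _ _", symmetric] Suc.prems by (simp add: recursive)
qed simp

lemma value_error_bounds:
  defines "C \<equiv> (\<epsilon> + \<gamma> * D) / (1 - \<gamma>)"
  shows "0 \<le> C" and "\<epsilon> + \<gamma> * D + \<gamma> * C \<le> C"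
proof -
  have "0 \<le> \<epsilon>" "0 \<le> D"
    using reward_approx[of "(s0, [])" undefined] transition_approx[of "(s0, [])" undefined] by auto
  then show "0 \<le> C" unfolding C_def using discount by simp
  show "\<epsilon> + \<gamma> * D + \<gamma> * C \<le> C" unfolding C_def using discount by (simp add: field_simps)
qed

lemma lim_hist_val_le:
  assumes "fst g = s0"
  shows "lim (\<lambda>n. hist_val P r \<gamma> pol n g) \<le> Vh (\<sigma> g) + (\<epsilon> + \<gamma> * D) / (1 - \<gamma>)"
proof -
  obtain B where B: "\<And>z. \<bar>Vh z\<bar> \<le> B" using Vh_bounded by blast
  show ?thesis
    by (rule lim_le_of_geometric_bound[OF convergent_hist_val[OF discount]
          hist_val_le[OF B value_error_bounds assms] discount])
qed

lemma lim_induced_hist_val_ge: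
  assumes "fst g = s0"
  shows "Vh (\<sigma> g) - (\<epsilon> + \<gamma> * D) / (1 - \<gamma>)
    \<le> lim (\<lambda>n. hist_val P r \<gamma> (\<lambda>g. mu (\<sigma> g)) n g)"
proof -
  obtain B where B: "\<And>z. \<bar>Vh z\<bar> \<le> B" using Vh_bounded by blast
  show ?thesis
    by (rule lim_ge_of_geometric_bound[OF convergent_hist_val[OF discount]
          induced_hist_val_ge[OF B value_error_bounds assms] discount])
qed

lemma induced_value_approx:
  assumes "fst h = s0"
  shows "\<bar>induced_value P r \<gamma> fhat mu \<sigma> h - Vh (\<sigma> h)\<bar> \<le> (\<epsilon> + \<gamma> * D) / (1 - \<gamma>)"
  using lim_hist_val_le[OF assms, of "\<lambda>g. mu (\<sigma> g)"] lim_induced_hist_val_ge[OF assms]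
  unfolding induced_value_def feat_val_eq_hist_val[OF assms] by linarith

lemma rooted_ais_hist_append:
  assumes "fst h = s0"
  shows "rooted_ais P r \<gamma> (\<lambda>g. \<sigma> (hist_append h g)) fhat rhat Phat Vh mu \<epsilon> D (last_state h)"
proof
  fix g :: "('s,'a) hist" and a s' assume g: "fst g = last_state h"
  show "\<sigma> (hist_append h (ext_hist g a s')) = fhat (\<sigma> (hist_append h g)) s' a"
    using assms by (simp add: hist_append_ext_hist recursive)
  show "\<bar>r (last_state g) a - rhat (\<sigma> (hist_append h g)) a\<bar> \<le> \<epsilon>"
    using reward_approx[of "hist_append h g" a] assms by (simp add: last_state_hist_append[OF g])
  show "\<bar>(\<Sum>s\<in>UNIV. pmf (P (last_state g) a) s * Vh (fhat (\<sigma> (hist_append h g)) s a))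
      - (\<Sum>s\<in>UNIV. pmf (Phat (\<sigma> (hist_append h g)) a) s * Vh (fhat (\<sigma> (hist_append h g)) s a))\<bar> \<le> D"
    using transition_approx[of "hist_append h g" a] assms by (simp add: last_state_hist_append[OF g])
qed (use discount Qhat_le_Vh greedy Vh_bounded in auto)

lemma Vstar_approx:
  assumes "fst h = s0"
  shows "\<bar>Vstar P r \<gamma> (last_state h) - Vh (\<sigma> h)\<bar> \<le> (\<epsilon> + \<gamma> * D) / (1 - \<gamma>)"
proof -
  interpret shifted: rooted_ais P r \<gamma> "\<lambda>g. \<sigma> (hist_append h g)" fhat rhat Phat Vh mu \<epsilon> D "last_state h"
    using assms by (rule rooted_ais_hist_append)
  let ?C = "(\<epsilon> + \<gamma> * D) / (1 - \<gamma>)"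
  have upper: "policy_value P r \<gamma> pol (last_state h) \<le> Vh (\<sigma> h) + ?C" for pol
    using shifted.lim_hist_val_le[of "(last_state h, [])" pol] by (simp add: policy_value_def)
  have "Vh (\<sigma> h) - ?C \<le> policy_value P r \<gamma> (\<lambda>g. mu (\<sigma> (hist_append h g))) (last_state h)"
    using shifted.lim_induced_hist_val_ge[of "(last_state h, [])"] by (simp add: policy_value_def)
  also have "\<dots> \<le> Vstar P r \<gamma> (last_state h)"
    unfolding Vstar_def using upper by (intro cSUP_upper bdd_aboveI2) auto
  finally have "Vh (\<sigma> h) - ?C \<le> Vstar P r \<gamma> (last_state h)" .
  moreover have "Vstar P r \<gamma> (last_state h) \<le> Vh (\<sigma> h) + ?C"
    unfolding Vstar_def using upper by (intro cSUP_least) auto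
  ultimately show ?thesis by linarith
qed

lemma Vstar_minus_induced_value_le:
  assumes "fst h = s0"
  shows "\<bar>Vstar P r \<gamma> (last_state h) - induced_value P r \<gamma> fhat mu \<sigma> h\<bar>
    \<le> 2 * ((\<epsilon> + \<gamma> * D) / (1 - \<gamma>))"
  using abs_triangle_ineq4[of "Vstar P r \<gamma> (last_state h) - Vh (\<sigma> h)"
      "induced_value P r \<gamma> fhat mu \<sigma> h - Vh (\<sigma> h)"]
    Vstar_approx[OF assms] induced_value_approx[OF assms] by linarith

end

theorem theorem1:
  fixes P :: "'s::finite \<Rightarrow> 'a::finite \<Rightarrow> 's pmf"
    and r :: "'s \<Rightarrow> 'a \<Rightarrow> real"
    and \<gamma> :: real
    and \<sigma> :: "('s,'a) hist \<Rightarrow> 'z"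
    and fhat :: "'z \<Rightarrow> 's \<Rightarrow> 'a \<Rightarrow> 'z"
    and F :: "('s \<Rightarrow> real) set"
    and \<epsilon> \<delta> :: real
    and rhat :: "'z \<Rightarrow> 'a \<Rightarrow> real"
    and Phat :: "'z \<Rightarrow> 'a \<Rightarrow> 's pmf"
    and Vh :: "'z \<Rightarrow> real"
    and mu :: "'z \<Rightarrow> 'a pmf"
  assumes gamma: "0 < \<gamma>" "\<gamma> < 1"
    and recursive: "\<And>h a s'. \<sigma> (ext_hist h a s') = fhat (\<sigma> h) s' a"
    and rhat_bounded: "\<exists>B. \<forall>z a. \<bar>rhat z a\<bar> \<le> B"
    and ais_r: "\<And>h a. \<bar>r (last_state h) a - rhat (\<sigma> h) a\<bar> \<le> \<epsilon>"
    and ais_P: "\<And>h a. ipm F (P (last_state h) a) (Phat (\<sigma> h) a) \<le> ereal \<delta>"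
    and Vh_bounded: "\<exists>B. \<forall>z. \<bar>Vh z\<bar> \<le> B"
    and Vh_dp: "\<And>z. Vh z = (MAX a\<in>UNIV. Qhat \<gamma> rhat Phat fhat Vh z a)"
    and greedy: "\<And>z. set_pmf (mu z) \<subseteq> {a. \<forall>b. Qhat \<gamma> rhat Phat fhat Vh z b \<le> Qhat \<gamma> rhat Phat fhat Vh z a}"
  shows "kappa F Vh fhat < \<infinity> \<longrightarrow>
    (SUP h. ereal \<bar>Vstar P r \<gamma> (last_state h) - induced_value P r \<gamma> fhat mu \<sigma> h\<bar>)
      \<le> ereal (2 * (\<epsilon> + \<gamma> * \<delta> * real_of_ereal (kappa F Vh fhat)) / (1 - \<gamma>))"
proof
  assume "kappa F Vh fhat < \<infinity>"
  then obtain \<kappa> where \<kappa>: "kappa F Vh fhat = ereal \<kappa>"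
    using kappa_nonneg[of F Vh fhat] by (cases "kappa F Vh fhat") auto
  have Qhat_le_Vh: "Qhat \<gamma> rhat Phat fhat Vh z a \<le> Vh z" for z a
    unfolding Vh_dp[of z] by (rule Max_ge) auto
  have Vh_le_Qhat: "Vh z \<le> Qhat \<gamma> rhat Phat fhat Vh z a" if "a \<in> set_pmf (mu z)" for z a
    using Max_in[of "range (Qhat \<gamma> rhat Phat fhat Vh z)"] Vh_dp[of z] greedy[of z] that by auto
  have ais: "rooted_ais P r \<gamma> \<sigma> fhat rhat Phat Vh mu \<epsilon> (\<delta> * \<kappa>) s0" for s0
  proof
    show "\<bar>(\<Sum>s\<in>UNIV. pmf (P (last_state g) a) s * Vh (fhat (\<sigma> g) s a))
        - (\<Sum>s\<in>UNIV. pmf (Phat (\<sigma> g) a) s * Vh (fhat (\<sigma> g) s a))\<bar> \<le> \<delta> * \<kappa>" for g a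
      using minkowski_le_kappa[of F Vh fhat "\<sigma> g" a] ais_P[of g a] unfolding \<kappa>
      by (rule abs_sum_pmf_diff_le_ipm_minkowski)
  qed (use gamma recursive ais_r Qhat_le_Vh Vh_le_Qhat Vh_bounded in auto)
  have "\<bar>Vstar P r \<gamma> (last_state h) - induced_value P r \<gamma> fhat mu \<sigma> h\<bar>
      \<le> 2 * ((\<epsilon> + \<gamma> * (\<delta> * \<kappa>)) / (1 - \<gamma>))" for h
    by (rule rooted_ais.Vstar_minus_induced_value_le[OF ais refl])
  then show "(SUP h. ereal \<bar>Vstar P r \<gamma> (last_state h) - induced_value P r \<gamma> fhat mu \<sigma> h\<bar>)
      \<le> ereal (2 * (\<epsilon> + \<gamma> * \<delta> * real_of_ereal (kappa F Vh fhat)) / (1 - \<gamma>))"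
    unfolding \<kappa> by (intro SUP_least) (simp add: mult.assoc)
qed

end
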